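(* Let $F$ be a field of characteristic $0$, $n\ge 3$, and $f\in T_n$. Let $\pi:F[x_1,\dots,x_n]\to F[x_1,\dots,x_{n-2}]$ be the homomorphism with $\pi(x_{n-1})=\pi(x_n)=0$ and $\pi(x_k)=x_k$ for $k\le n-2$, and write $\overline{p_k}=x_1^k+\dots+x_{n-2}^k$. Suppose there is a polynomial $g\in F[y_1,y_3,y_5,\dots]$ (finitely many variables) with $\pi(f)=g(\overline{p_1},\overline{p_3},\overline{p_5},\dots)$. Then $f-g(p_1,p_3,p_5,\dots)$ is divisible by $\delta=\prod_{1\le k<\ell\le n}(x_k+x_\ell)$.
   Context: $p_k=x_1^k+\dots+x_n^k$. A polynomial $p\in F[x_1,\dots,x_n]$ is monotypically supersymmetric if it is symmetric and, after substituting $x_1=t,\ x_2=-t$, the result does not depend on $t$; $T_n$ is the algebra of such polynomials. *)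

theory Defs
  imports Main "HOL-Library.Poly_Mapping" "HOL-Combinatorics.Permutations"
begin

text \<open>The paper's variables x_1..x_n are
  the variables with indices 1..n.\<close>

type_synonym 'a mpoly = "(nat \<Rightarrow>\<^sub>0 nat) \<Rightarrow>\<^sub>0 'a"

definition mconst :: "'a::zero \<Rightarrow> 'a mpoly" where
  "mconst c = Poly_Mapping.single 0 c"

definition Var :: "nat \<Rightarrow> 'a::{zero,one} mpoly" where
  "Var i = Poly_Mapping.single (Poly_Mapping.single i 1) 1"

definition subst :: "(nat \<Rightarrow> 'a::comm_ring_1 mpoly) \<Rightarrow> 'a mpoly \<Rightarrow> 'a mpoly" where
  "subst s p = (\<Sum>m\<in>Poly_Mapping.keys p. mconst (Poly_Mapping.lookup p m) *
                  (\<Prod>i\<in>Poly_Mapping.keys m. s i ^ Poly_Mapping.lookup m i))"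

definition vars :: "'a::zero mpoly \<Rightarrow> nat set" where
  "vars p = (\<Union>m\<in>Poly_Mapping.keys p. Poly_Mapping.keys m)"

definition in_ring :: "nat \<Rightarrow> 'a::zero mpoly \<Rightarrow> bool" where
  "in_ring n p \<longleftrightarrow> vars p \<subseteq> {1..n}"

definition psum :: "nat \<Rightarrow> nat \<Rightarrow> 'a::comm_ring_1 mpoly" where
  "psum n k = (\<Sum>i=1..n. Var i ^ k)"

definition symmetric :: "nat \<Rightarrow> 'a::comm_ring_1 mpoly \<Rightarrow> bool" where
  "symmetric n p \<longleftrightarrow> in_ring n p \<and>
     (\<forall>\<sigma>. \<sigma> permutes {1..n} \<longrightarrow> subst (\<lambda>i. Var (\<sigma> i)) p = p)"

text \<open>Monotypically supersymmetric: symmetric, and after substituting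
  x_1 = t, x_2 = -t the result does not depend on t. We use the variable x_1
  itself as the new variable t (it no longer occurs otherwise after the
  substitution); "does not depend on t" means no monomial of the result
  contains t.\<close>
definition mono_supersym :: "nat \<Rightarrow> 'a::comm_ring_1 mpoly \<Rightarrow> bool" where
  "mono_supersym n p \<longleftrightarrow> symmetric n p \<and>
     1 \<notin> vars (subst (\<lambda>i. if i = 2 then - Var 1 else Var i) p)"

definition T :: "nat \<Rightarrow> 'a::comm_ring_1 mpoly set" where
  "T n = {p. mono_supersym n p}"

definition delta :: "nat \<Rightarrow> 'a::comm_ring_1 mpoly" where
  "delta n = (\<Prod>(k,l)\<in>{(k,l). 1 \<le> k \<and> k < l \<and> l \<le> n}. Var k + Var l)"

end

theory Submission
  imports Defs
begin

text \<open>Put \<open>h = f - g(p\<^sub>1, p\<^sub>3, \<dots>)\<close> and substitute \<open>x\<^sub>2 \<mapsto> -x\<^sub>1\<close>. The odd power sums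
  become the power sums of \<open>x\<^sub>3, \<dots>, x\<^sub>n\<close>. By monotypic supersymmetry \<open>f\<close> becomes
  \<open>f(0, 0, x\<^sub>3, \<dots>, x\<^sub>n)\<close>, which by symmetry is \<open>\<pi>(f)\<close> with \<open>x\<^sub>1, \<dots>, x\<^bsub>n-2\<^esub>\<close> renamed to
  \<open>x\<^sub>3, \<dots>, x\<^sub>n\<close>, i.e. \<open>g\<close> evaluated at the same power sums. So \<open>h\<close> vanishes under
  \<open>x\<^sub>2 \<mapsto> -x\<^sub>1\<close> and, being symmetric, under every \<open>x\<^sub>l \<mapsto> -x\<^sub>k\<close>; hence each \<open>x\<^sub>k + x\<^sub>l\<close>
  divides \<open>h\<close>. These linear forms are pairwise non-associate and the polynomial ring is a
  domain, so their product \<open>\<delta>\<close> divides \<open>h\<close>.\<close>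

subsection \<open>The substitution homomorphism\<close>

abbreviation subst_monom :: "(nat \<Rightarrow> 'a::comm_ring_1 mpoly) \<Rightarrow> (nat \<Rightarrow>\<^sub>0 nat) \<Rightarrow> 'a mpoly" where
  "subst_monom s m \<equiv> (\<Prod>i\<in>Poly_Mapping.keys m. s i ^ Poly_Mapping.lookup m i)"

lemma mconst_add: "mconst (a + b) = mconst a + mconst b"
  by (simp add: mconst_def single_add)

lemma mconst_mult: "mconst (a * b) = mconst a * (mconst b :: 'a::comm_ring_1 mpoly)"
  by (simp add: mconst_def mult_single)

lemma mconst_uminus: "mconst (- a) = - (mconst a :: 'a::comm_ring_1 mpoly)"
  by (simp add: mconst_def single_uminus)

lemma mconst_0 [simp]: "mconst 0 = 0"
  by (simp add: mconst_def)

lemma mconst_1 [simp]: "mconst 1 = (1 :: 'a::comm_ring_1 mpoly)"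
  by (simp add: mconst_def)

lemma poly_mapping_sum_single:
  "(p :: 'b \<Rightarrow>\<^sub>0 'c::comm_monoid_add) =
     (\<Sum>m\<in>Poly_Mapping.keys p. Poly_Mapping.single m (Poly_Mapping.lookup p m))"
  by (rule poly_mapping_eqI) (simp add: lookup_sum lookup_single when_def in_keys_iff)

lemma subst_monom_superset:
  assumes "finite A" "Poly_Mapping.keys m \<subseteq> A"
  shows "subst_monom s m = (\<Prod>i\<in>A. s i ^ Poly_Mapping.lookup m i)"
  by (rule prod.mono_neutral_left) (use assms in \<open>auto simp: in_keys_iff\<close>)

lemma subst_monom_add: "subst_monom s (m + m') = subst_monom s m * subst_monom s m'"
proof -
  let ?A = "Poly_Mapping.keys m \<union> Poly_Mapping.keys m'"
  have "subst_monom s (m + m') = (\<Prod>i\<in>?A. s i ^ Poly_Mapping.lookup (m + m') i)"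
    using keys_add[of m m'] by (intro subst_monom_superset) auto
  also have "\<dots> = (\<Prod>i\<in>?A. s i ^ Poly_Mapping.lookup m i) * (\<Prod>i\<in>?A. s i ^ Poly_Mapping.lookup m' i)"
    by (simp add: lookup_add power_add prod.distrib)
  also have "\<dots> = subst_monom s m * subst_monom s m'"
    by (subst (1 2) subst_monom_superset[where A = ?A]) auto
  finally show ?thesis .
qed

lemma subst_superset:
  assumes "finite A" "Poly_Mapping.keys p \<subseteq> A"
  shows "subst s p = (\<Sum>m\<in>A. mconst (Poly_Mapping.lookup p m) * subst_monom s m)"
  unfolding subst_def
  by (rule sum.mono_neutral_left) (use assms in \<open>auto simp: in_keys_iff\<close>)

lemma subst_add: "subst s (p + q) = subst s p + subst s q"
proof -
  let ?A = "Poly_Mapping.keys p \<union> Poly_Mapping.keys q"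
  have "subst s (p + q) = (\<Sum>m\<in>?A. mconst (Poly_Mapping.lookup (p + q) m) * subst_monom s m)"
    using keys_add[of p q] by (intro subst_superset) auto
  also have "\<dots> = (\<Sum>m\<in>?A. mconst (Poly_Mapping.lookup p m) * subst_monom s m)
                 + (\<Sum>m\<in>?A. mconst (Poly_Mapping.lookup q m) * subst_monom s m)"
    by (simp add: lookup_add mconst_add distrib_right sum.distrib)
  also have "\<dots> = subst s p + subst s q"
    by (subst (1 2) subst_superset[where A = ?A]) auto
  finally show ?thesis .
qed

lemma subst_0 [simp]: "subst s 0 = 0"
  by (simp add: subst_def)

lemma subst_uminus: "subst s (- p) = - subst s p"
  by (simp add: subst_def lookup_minus mconst_uminus sum_negf)

lemma subst_diff: "subst s (p - q) = subst s p - subst s q"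
  using subst_add[of s p "- q"] by (simp add: subst_uminus)

lemma subst_sum: "subst s (sum f A) = (\<Sum>x\<in>A. subst s (f x))"
  by (induction A rule: infinite_finite_induct) (auto simp: subst_add)

lemma subst_single: "subst s (Poly_Mapping.single m c) = mconst c * subst_monom s m"
  by (subst subst_superset[where A = "{m}"]) (auto simp: lookup_single)

lemma subst_mult: "subst s (p * q) = subst s p * subst s q"
proof -
  have "p * q = (\<Sum>m\<in>Poly_Mapping.keys p. \<Sum>m'\<in>Poly_Mapping.keys q.
      Poly_Mapping.single (m + m') (Poly_Mapping.lookup p m * Poly_Mapping.lookup q m'))"
    by (subst (1 2) poly_mapping_sum_single)
       (simp add: sum_distrib_left sum_distrib_right mult_single, rule sum.swap)
  then have "subst s (p * q) = (\<Sum>m\<in>Poly_Mapping.keys p. \<Sum>m'\<in>Poly_Mapping.keys q.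
      (mconst (Poly_Mapping.lookup p m) * subst_monom s m) *
      (mconst (Poly_Mapping.lookup q m') * subst_monom s m'))"
    by (simp add: subst_sum subst_single subst_monom_add mconst_mult mult_ac)
  also have "\<dots> = subst s p * subst s q"
    by (simp add: subst_def sum_distrib_left sum_distrib_right) (rule sum.swap)
  finally show ?thesis .
qed

lemma subst_mconst [simp]: "subst s (mconst c) = mconst c"
  by (simp add: mconst_def subst_single)

lemma subst_1 [simp]: "subst s 1 = 1"
  using subst_mconst[of s 1] by simp

lemma subst_Var [simp]: "subst s (Var i) = s i"
  by (simp add: Var_def subst_single)

lemma subst_power: "subst s (p ^ k) = subst s p ^ k"
  by (induction k) (auto simp: subst_mult)

lemma subst_prod: "subst s (prod f A) = (\<Prod>x\<in>A. subst s (f x))"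
  by (induction A rule: infinite_finite_induct) (auto simp: subst_mult)

lemma subst_subst: "subst s (subst t p) = subst (\<lambda>i. subst s (t i)) p"
  by (simp add: subst_def[of t] subst_sum subst_mult subst_prod subst_power)
     (simp add: subst_def)

lemma subst_psum: "subst s (psum n k) = (\<Sum>i=1..n. s i ^ k)"
  by (simp add: psum_def subst_sum subst_power)

lemma subst_cong:
  assumes "\<And>i. i \<in> vars p \<Longrightarrow> s i = t i"
  shows "subst s p = subst t p"
  unfolding subst_def
  by (intro sum.cong refl arg_cong[where f = "\<lambda>x. _ * x"] prod.cong)
     (use assms in \<open>fastforce simp: vars_def\<close>)

lemma Var_power: "(Var i :: 'a::comm_ring_1 mpoly) ^ e = Poly_Mapping.single (Poly_Mapping.single i e) 1"
proof (induction e)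
  case (Suc e)
  have "Poly_Mapping.single i (Suc e) = Poly_Mapping.single i 1 + Poly_Mapping.single i e"
    by (simp add: single_add[symmetric])
  with Suc show ?case by (simp add: Var_def mult_single)
qed simp

lemma prod_single_1:
  "(\<Prod>i\<in>A. Poly_Mapping.single (f i) (1::'a::comm_ring_1)) = Poly_Mapping.single (\<Sum>i\<in>A. f i) 1"
  by (induction A rule: infinite_finite_induct) (auto simp: mult_single)

lemma subst_Var_id [simp]: "subst Var p = (p :: 'a::comm_ring_1 mpoly)"
proof -
  have "subst_monom Var m = (Poly_Mapping.single m 1 :: 'a mpoly)" for m
    by (simp add: Var_power prod_single_1 poly_mapping_sum_single[of m, symmetric])
  then have "subst Var p = (\<Sum>m\<in>Poly_Mapping.keys p. Poly_Mapping.single m (Poly_Mapping.lookup p m))"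
    by (simp add: subst_def mconst_def mult_single)
  then show ?thesis
    by (simp flip: poly_mapping_sum_single)
qed

lemma subst_id_on_vars:
  assumes "\<And>i. i \<in> vars p \<Longrightarrow> s i = Var i"
  shows "subst s p = p"
  using subst_cong[of p s Var, OF assms] by simp

subsection \<open>Divisibility by the linear forms \<open>x\<^sub>k + x\<^sub>l\<close>\<close>

abbreviation oppose :: "nat \<Rightarrow> nat \<Rightarrow> nat \<Rightarrow> 'a::comm_ring_1 mpoly" where
  "oppose k l \<equiv> (\<lambda>i. if i = l then - Var k else Var i)"

lemma dvd_prod_diff:
  fixes d :: "'b::comm_ring_1"
  assumes "\<And>i. i \<in> A \<Longrightarrow> d dvd a i - b i"
  shows "d dvd (\<Prod>i\<in>A. a i) - (\<Prod>i\<in>A. b i)"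
  using assms
proof (induction A rule: infinite_finite_induct)
  case (insert x F)
  have "(\<Prod>i\<in>insert x F. a i) - (\<Prod>i\<in>insert x F. b i)
      = a x * ((\<Prod>i\<in>F. a i) - (\<Prod>i\<in>F. b i)) + (a x - b x) * (\<Prod>i\<in>F. b i)"
    using insert by (simp add: algebra_simps)
  with insert show ?case by (simp add: dvd_add dvd_mult dvd_mult2)
qed auto

lemma subst_dvd_diff:
  assumes "\<And>i. d dvd s i - t i"
  shows "d dvd subst s p - subst t p"
proof -
  have "d dvd s i ^ e - t i ^ e" for i e
    using assms[of i] power_diff_sumr2[of "s i" e "t i"] by (auto intro: dvd_trans)
  then show ?thesis
    unfolding subst_def sum_subtractf[symmetric] right_diff_distrib[symmetric]
    by (intro dvd_sum dvd_mult dvd_prod_diff)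
qed

lemma Var_add_dvd_diff_oppose: "(Var k + Var l) dvd p - subst (oppose k l) p"
  using subst_dvd_diff[of "Var k + Var l" Var "oppose k l" p] by (simp add: add.commute)

lemma lookup_Var:
  "Poly_Mapping.lookup (Var j :: 'a::comm_ring_1 mpoly) (Poly_Mapping.single i 1) = (if i = j then 1 else 0)"
proof -
  have "Poly_Mapping.single j (1::nat) = Poly_Mapping.single i 1 \<Longrightarrow> i = j"
    by (metis lookup_single_eq lookup_single_not_eq one_neq_zero)
  then show ?thesis by (auto simp: Var_def lookup_single when_def)
qed

lemma subst_oppose_Var_add_nonzero:
  assumes "a < b" "k < l" "(a, b) \<noteq> (k, l)"
  shows "subst (oppose k l) (Var a + Var b :: 'a::comm_ring_1 mpoly) \<noteq> 0"
proof -
  let ?q = "oppose k l a + oppose k l b :: 'a mpoly"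
  have "Poly_Mapping.lookup ?q (Poly_Mapping.single (if a = l then b else a) 1) = 1"
    using assms by (auto simp: lookup_add lookup_minus lookup_Var lookup_Var[simplified])
  then show ?thesis
    by (auto simp: subst_add)
qed

lemma prod_Var_add_dvd:
  fixes h :: "'a::idom mpoly"
  assumes "finite S" "\<And>k l. (k, l) \<in> S \<Longrightarrow> k < l"
    and "\<And>k l. (k, l) \<in> S \<Longrightarrow> subst (oppose k l) h = 0"
  shows "(\<Prod>(k, l)\<in>S. Var k + Var l) dvd h"
  using assms
proof (induction S arbitrary: h rule: finite_induct)
  case (insert x S)
  obtain k l where x: "x = (k, l)" by (cases x)
  have "(Var k + Var l) dvd h"
    using Var_add_dvd_diff_oppose[of k l h] insert.prems x by simp
  then obtain q where h: "h = (Var k + Var l) * q" ..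
  have "subst (oppose a b) q = 0" if ab: "(a, b) \<in> S" for a b
  proof -
    have "subst (oppose a b) (Var k + Var l) * subst (oppose a b) q = 0"
      using insert.prems(2)[of a b] ab by (simp add: h subst_mult)
    moreover have "subst (oppose a b) (Var k + Var l :: 'a mpoly) \<noteq> 0"
      using insert ab x by (intro subst_oppose_Var_add_nonzero) auto
    ultimately show ?thesis by simp
  qed
  then have "(\<Prod>(k, l)\<in>S. Var k + Var l) dvd q"
    using insert by auto
  with insert.hyps x show ?case
    by (simp add: h)
qed simp

subsection \<open>Symmetry\<close>

abbreviation rename :: "(nat \<Rightarrow> nat) \<Rightarrow> nat \<Rightarrow> 'a::{zero,one} mpoly" where
  "rename \<sigma> \<equiv> (\<lambda>i. Var (\<sigma> i))"

lemma subst_rename_psum: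
  assumes "\<sigma> permutes {1..n}"
  shows "subst (rename \<sigma>) (psum n k) = (psum n k :: 'a::comm_ring_1 mpoly)"
  unfolding subst_psum unfolding psum_def using sum.permute[OF assms, of "\<lambda>i. Var i ^ k :: 'a mpoly"]
  by (simp add: comp_def)

lemma subst_rename_oppose:
  assumes "inj \<sigma>"
  shows "subst (oppose (\<sigma> k) (\<sigma> l)) (subst (rename \<sigma>) p) = subst (rename \<sigma>) (subst (oppose k l) p)"
  unfolding subst_subst using injD[OF assms]
  by (intro arg_cong[where f = "\<lambda>s. subst s p"] ext) (auto simp: subst_uminus)

lemma symmetric_oppose_eq_0:
  assumes sym: "\<And>\<sigma>. \<sigma> permutes {1..n} \<Longrightarrow> subst (rename \<sigma>) h = h"
    and h12: "subst (oppose 1 2) h = 0"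
    and kl: "1 \<le> k" "k < l" "l \<le> n"
  shows "subst (oppose k l) h = 0"
proof -
  define \<sigma> where "\<sigma> = transpose 1 k \<circ> transpose 2 l"
  have \<sigma>: "\<sigma> permutes {1..n}"
    unfolding \<sigma>_def using kl by (intro permutes_compose permutes_swap_id) auto
  have \<sigma>12: "\<sigma> 1 = k" "\<sigma> 2 = l"
    using kl by (auto simp: \<sigma>_def transpose_def)
  have "subst (oppose k l) h = subst (oppose (\<sigma> 1) (\<sigma> 2)) (subst (rename \<sigma>) h)"
    by (simp only: \<sigma>12 sym[OF \<sigma>])
  also have "\<dots> = 0"
    using permutes_inj[OF \<sigma>] h12 by (simp add: subst_rename_oppose)
  finally show ?thesis .
qed

subsection \<open>The substitution \<open>x\<^sub>2 \<mapsto> -x\<^sub>1\<close>\<close>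

lemma subst_oppose_psum_odd:
  assumes "odd k" "2 \<le> n"
  shows "subst (oppose 1 2) (psum n k) = (\<Sum>i=3..n. Var i ^ k :: 'a::comm_ring_1 mpoly)"
proof -
  have "{1..n} = insert 1 (insert 2 {3..n})"
    using assms by auto
  moreover have "(\<Sum>i=3..n. oppose 1 2 i ^ k) = (\<Sum>i=3..n. Var i ^ k :: 'a mpoly)"
    by (rule sum.cong) auto
  ultimately show ?thesis
    using assms by (simp add: subst_psum power_minus_odd)
qed

lemma subst_oppose_12_eq_kill:
  assumes "1 \<notin> vars (subst (oppose 1 2) f)"
  shows "subst (oppose 1 2) f = subst (\<lambda>i. if i = 1 \<or> i = 2 then 0 else Var i) f"
proof -
  have "subst (oppose 1 2) f = subst (\<lambda>i. if i = 1 then 0 else Var i) (subst (oppose 1 2) f)"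
    by (rule subst_id_on_vars[symmetric]) (use assms in auto)
  also have "\<dots> = subst (\<lambda>i. if i = 1 \<or> i = 2 then 0 else Var i) f"
    unfolding subst_subst by (intro arg_cong[where f = "\<lambda>s. subst s f"] ext) (auto simp: subst_uminus)
  finally show ?thesis .
qed

text \<open>The permutation \<open>\<rho>\<close> moves \<open>x\<^bsub>n-1\<^esub>, x\<^sub>n\<close> to \<open>x\<^sub>1, x\<^sub>2\<close> and \<open>x\<^sub>1, \<dots>, x\<^bsub>n-2\<^esub>\<close> onto
  \<open>x\<^sub>3, \<dots>, x\<^sub>n\<close>, turning \<open>\<pi>\<close> into the substitution \<open>x\<^sub>1 = x\<^sub>2 = 0\<close>.\<close>

lemma symmetric_kill_12:
  fixes f g :: "'a::comm_ring_1 mpoly"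
  assumes "n \<ge> 3"
    and sym: "\<And>\<sigma>. \<sigma> permutes {1..n} \<Longrightarrow> subst (rename \<sigma>) f = f"
    and \<pi>f: "subst (\<lambda>i. if i = n - 1 \<or> i = n then 0 else Var i) f = subst (psum (n - 2)) g"
  shows "subst (\<lambda>i. if i = 1 \<or> i = 2 then 0 else Var i) f = subst (\<lambda>k. \<Sum>i=3..n. Var i ^ k) g"
proof -
  define \<rho> where "\<rho> = transpose 2 n \<circ> transpose 1 (n - 1)"
  have \<rho>: "\<rho> permutes {1..n}"
    unfolding \<rho>_def using assms(1) by (intro permutes_compose permutes_swap_id) auto
  have \<rho>_inj: "inj \<rho>"
    using \<rho> by (rule permutes_inj)
  have \<rho>_last: "\<rho> (n - 1) = 1" "\<rho> n = 2"
    using assms(1) by (auto simp: \<rho>_def transpose_def)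
  then have \<rho>12: "\<rho> i = 1 \<longleftrightarrow> i = n - 1" "\<rho> i = 2 \<longleftrightarrow> i = n" for i
    using \<rho>_inj by (metis injD)+
  have "{1..n-2} = {1..n} - {n-1, n}"
    using assms(1) by auto
  then have "\<rho> ` {1..n-2} = \<rho> ` {1..n} - \<rho> ` {n-1, n}"
    by (simp add: image_set_diff[OF \<rho>_inj])
  also have "\<dots> = {1..n} - {1, 2}"
    using permutes_image[OF \<rho>] \<rho>_last by simp
  also have "\<dots> = {3..n}"
    by auto
  finally have bij: "bij_betw \<rho> {1..n-2} {3..n}"
    using inj_on_subset[OF \<rho>_inj] by (auto simp: bij_betw_def)
  have "subst (\<lambda>i. if i = 1 \<or> i = 2 then 0 else Var i) f
      = subst (\<lambda>i. if i = 1 \<or> i = 2 then 0 else Var i) (subst (rename \<rho>) f)"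
    using sym[OF \<rho>] by simp
  also have "\<dots> = subst (rename \<rho>) (subst (\<lambda>i. if i = n - 1 \<or> i = n then 0 else Var i) f)"
    unfolding subst_subst by (intro arg_cong[where f = "\<lambda>s. subst s f"] ext) (auto simp: \<rho>12 \<rho>12[simplified])
  also have "\<dots> = subst (\<lambda>k. \<Sum>i=1..n-2. Var (\<rho> i) ^ k) g"
    unfolding \<pi>f subst_subst subst_psum ..
  also have "\<dots> = subst (\<lambda>k. \<Sum>i=3..n. Var i ^ k) g"
    using sum.reindex_bij_betw[OF bij, of "\<lambda>i. Var i ^ _ :: 'a mpoly"] by simp
  finally show ?thesis .
qed

theorem mainTheorem6:
  fixes f g :: "'a::field_char_0 mpoly" and n :: nat
  assumes "n \<ge> 3"
    and "f \<in> T n"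
    and "\<forall>j\<in>vars g. odd j"
    and "subst (\<lambda>i. if i = n - 1 \<or> i = n then 0 else Var i) f
         = subst (\<lambda>k. psum (n - 2) k) g"
  shows "delta n dvd (f - subst (\<lambda>k. psum n k) g)"
proof -
  define h where "h = f - subst (psum n) g"
  have sym_f: "\<And>\<sigma>. \<sigma> permutes {1..n} \<Longrightarrow> subst (rename \<sigma>) f = f"
    and supersym: "1 \<notin> vars (subst (oppose 1 2) f)"
    using assms(2) by (auto simp: T_def mono_supersym_def symmetric_def)
  have "subst (oppose 1 2) f = subst (\<lambda>k. \<Sum>i=3..n. Var i ^ k) g"
    using subst_oppose_12_eq_kill[OF supersym] symmetric_kill_12[OF assms(1) sym_f assms(4)] by simp
  also have "\<dots> = subst (oppose 1 2) (subst (psum n) g)"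
    unfolding subst_subst using assms(1,3) by (intro subst_cong) (simp add: subst_oppose_psum_odd)
  finally have h12: "subst (oppose 1 2) h = 0"
    by (simp add: h_def subst_diff)
  have sym_h: "subst (rename \<sigma>) h = h" if "\<sigma> permutes {1..n}" for \<sigma>
    using that by (simp add: h_def subst_diff sym_f subst_subst subst_rename_psum)
  have "(\<Prod>(k, l)\<in>{(k, l). 1 \<le> k \<and> k < l \<and> l \<le> n}. Var k + Var l) dvd h"
    using symmetric_oppose_eq_0[OF sym_h h12]
    by (intro prod_Var_add_dvd) (auto intro: finite_subset[of _ "{1..n} \<times> {1..n}"])
  then show ?thesis
    by (simp add: h_def delta_def)
qed

end
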